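(* Let $\mathcal{X}$ and $\mathcal{W}$ be finite sets and $G\in\mathbb{R}^{|\mathcal{W}|\times|\mathcal{X}|}$ a matrix such that for every probability vector $q$ on $\mathcal{X}$, $\|Gq\|_1>0$ and $Gq/\|Gq\|_1$ is entrywise non-negative. Let $(\eta,F)$ be a generalised entropy. For jointly distributed random variables $X$ (values in $\mathcal{X}$, distribution $p$) and $Y$ (discrete), define $H_g(X)=\eta\big(\|Gp\|_1F(Gp/\|Gp\|_1)\big)$ and $H_g(X\mid Y)=\eta\Big(\sum_{y:\,p(y)>0}p(y)\|Gp_{X\mid y}\|_1F\big(Gp_{X\mid y}/\|Gp_{X\mid y}\|_1\big)\Big)$. Then $H_g(X)-H_g(X\mid Y)\geq 0$.
   Context: Generalised entropy: a pair $(\eta,F)$ where $F$ is a bounded real-valued function on probability vectors of every finite length that is symmetric (unchanged by permuting entries) and expansible (unchanged by appending zero entries), and $\eta$ is a real function, such that either $\eta$ is increasing and $F$ concave, or $\eta$ is decreasing and $F$ convex. $p_{X\mid y}=(p(x\mid y))_{x\in\mathcal{X}}$ is the posterior vector and $\|\cdot\|_1$ the $\ell_1$ norm. *)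

theory Defs
  imports "HOL-Probability.Probability"
begin

definition prob_vec :: "real list \<Rightarrow> bool" where
  "prob_vec xs \<longleftrightarrow> (\<forall>a\<in>set xs. 0 \<le> a) \<and> sum_list xs = 1"

definition concave_F :: "(real list \<Rightarrow> real) \<Rightarrow> bool" where
  "concave_F F \<longleftrightarrow> (\<forall>xs ys t. prob_vec xs \<longrightarrow> prob_vec ys \<longrightarrow> length xs = length ys
     \<longrightarrow> 0 \<le> t \<longrightarrow> t \<le> 1 \<longrightarrow>
     t * F xs + (1 - t) * F ys \<le> F (map2 (\<lambda>a b. t * a + (1 - t) * b) xs ys))"

definition convex_F :: "(real list \<Rightarrow> real) \<Rightarrow> bool" where
  "convex_F F \<longleftrightarrow> (\<forall>xs ys t. prob_vec xs \<longrightarrow> prob_vec ys \<longrightarrow> length xs = length ys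
     \<longrightarrow> 0 \<le> t \<longrightarrow> t \<le> 1 \<longrightarrow>
     F (map2 (\<lambda>a b. t * a + (1 - t) * b) xs ys) \<le> t * F xs + (1 - t) * F ys)"

definition generalised_entropy :: "(real \<Rightarrow> real) \<Rightarrow> (real list \<Rightarrow> real) \<Rightarrow> bool" where
  "generalised_entropy \<eta> F \<longleftrightarrow>
     (\<exists>B. \<forall>xs. prob_vec xs \<longrightarrow> \<bar>F xs\<bar> \<le> B) \<and>
     (\<forall>xs ys. prob_vec xs \<longrightarrow> mset ys = mset xs \<longrightarrow> F ys = F xs) \<and>
     (\<forall>xs. prob_vec xs \<longrightarrow> F (xs @ [0]) = F xs) \<and>
     ((mono \<eta> \<and> concave_F F) \<or> (antimono \<eta> \<and> convex_F F))"

text \<open>A vector indexed by a finite type, listed in some fixed order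
  (the choice is irrelevant since F is symmetric).\<close>
definition to_list :: "('w::finite \<Rightarrow> real) \<Rightarrow> real list" where
  "to_list v = map v (SOME ws. distinct ws \<and> set ws = (UNIV :: 'w set))"

definition matvec :: "('w::finite \<Rightarrow> 'x::finite \<Rightarrow> real) \<Rightarrow> ('x \<Rightarrow> real) \<Rightarrow> 'w \<Rightarrow> real" where
  "matvec G q = (\<lambda>w. \<Sum>x\<in>UNIV. G w x * q x)"

definition norm1 :: "('w::finite \<Rightarrow> real) \<Rightarrow> real" where
  "norm1 v = (\<Sum>w\<in>UNIV. \<bar>v w\<bar>)"

definition persp :: "(real list \<Rightarrow> real) \<Rightarrow> ('w::finite \<Rightarrow> real) \<Rightarrow> real" where
  "persp F v = norm1 v * F (to_list (\<lambda>w. v w / norm1 v))"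

definition Hg :: "(real \<Rightarrow> real) \<Rightarrow> (real list \<Rightarrow> real) \<Rightarrow> ('w::finite \<Rightarrow> 'x::finite \<Rightarrow> real)
    \<Rightarrow> ('x \<times> 'y) pmf \<Rightarrow> real" where
  "Hg \<eta> F G P = \<eta> (persp F (matvec G (pmf (map_pmf fst P))))"

definition Hg_cond :: "(real \<Rightarrow> real) \<Rightarrow> (real list \<Rightarrow> real) \<Rightarrow> ('w::finite \<Rightarrow> 'x::finite \<Rightarrow> real)
    \<Rightarrow> ('x \<times> 'y) pmf \<Rightarrow> real" where
  "Hg_cond \<eta> F G P = \<eta> (\<Sum>\<^sub>\<infinity>y\<in>{y. 0 < pmf (map_pmf snd P) y}.
      pmf (map_pmf snd P) y *
      persp F (matvec G (\<lambda>x. pmf P (x, y) / pmf (map_pmf snd P) y)))"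

end

theory Submission
  imports Defs
begin

text \<open>
  Write \<open>q\<^sub>y\<close> for the posterior \<open>p\<^sub>X\<^sub>|\<^sub>y\<close>. With \<open>v\<^sub>y = G q\<^sub>y / \<parallel>G q\<^sub>y\<parallel>\<^sub>1\<close> and
  \<open>w\<^sub>y = p(y) \<parallel>G q\<^sub>y\<parallel>\<^sub>1 / \<parallel>G p\<parallel>\<^sub>1\<close>, linearity of \<open>G\<close> and \<open>p = \<Sum>\<^sub>y p(y) q\<^sub>y\<close> give
  \<open>\<Sum>\<^sub>y w\<^sub>y v\<^sub>y = G p / \<parallel>G p\<parallel>\<^sub>1\<close>; as this point and all \<open>v\<^sub>y\<close> lie in the probability simplex,
  the \<open>w\<^sub>y\<close> sum to 1. So the argument of \<open>\<eta>\<close> in \<open>H\<^sub>g(X|Y)\<close> is \<open>\<parallel>G p\<parallel>\<^sub>1 \<Sum>\<^sub>y w\<^sub>y F(v\<^sub>y)\<close>,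
  and Jensen's inequality for concave \<open>F\<close> bounds it by \<open>\<parallel>G p\<parallel>\<^sub>1 F(\<Sum>\<^sub>y w\<^sub>y v\<^sub>y)\<close>, the
  argument of \<open>\<eta>\<close> in \<open>H\<^sub>g(X)\<close> (for convex \<open>F\<close> use \<open>-F\<close>); monotonicity of \<open>\<eta>\<close> concludes.

  Since \<open>Y\<close> may take countably many values, Jensen is needed for countable convex
  combinations. For a finite set \<open>J\<close> of indices, put the remaining mass \<open>1 - \<Sum>\<^sub>J w\<^sub>y\<close> on the
  normalised barycentre of the other \<open>v\<^sub>y\<close>, again a point of the simplex: finite Jensen gives
  \<open>\<Sum>\<^sub>J w\<^sub>y F(v\<^sub>y) \<le> F(\<Sum>\<^sub>y w\<^sub>y v\<^sub>y) + B (1 - \<Sum>\<^sub>J w\<^sub>y)\<close> for a bound \<open>B\<close> of \<open>|F|\<close>, and \<open>J\<close>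
  grows.
\<close>

definition prob_simplex :: "('k::finite \<Rightarrow> real) set" where
  "prob_simplex = {a. (\<forall>k. 0 \<le> a k) \<and> sum a UNIV = 1}"

definition concave_on_prob_simplex :: "(('k::finite \<Rightarrow> real) \<Rightarrow> real) \<Rightarrow> bool" where
  "concave_on_prob_simplex f \<longleftrightarrow> (\<forall>a\<in>prob_simplex. \<forall>b\<in>prob_simplex. \<forall>t\<in>{0..1}.
     t * f a + (1 - t) * f b \<le> f (\<lambda>k. t * a k + (1 - t) * b k))"

lemma convex_comb_in_prob_simplex:
  assumes "a \<in> prob_simplex" "b \<in> prob_simplex" "0 \<le> t" "t \<le> 1"
  shows "(\<lambda>k. t * a k + (1 - t) * b k) \<in> prob_simplex"
  using assms by (simp add: prob_simplex_def sum.distrib sum_distrib_left[symmetric])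

lemma normalized_in_prob_simplex:
  assumes "\<And>k. 0 \<le> v k" "0 < norm1 v"
  shows "(\<lambda>k. v k / norm1 v) \<in> prob_simplex"
  using assms by (simp add: prob_simplex_def norm1_def sum_divide_distrib[symmetric])

lemma jensen_prob_simplex_finite:
  assumes conc: "concave_on_prob_simplex f" and "finite J"
    and "\<And>i. i \<in> J \<Longrightarrow> 0 \<le> w i" "\<And>i. i \<in> J \<Longrightarrow> v i \<in> prob_simplex"
    and "sum w J \<le> 1" "t \<in> prob_simplex"
  shows "(\<Sum>i\<in>J. w i * f (v i)) + (1 - sum w J) * f t
         \<le> f (\<lambda>k. (\<Sum>i\<in>J. w i * v i k) + (1 - sum w J) * t k)"
  using assms(2-)
proof (induction J arbitrary: t rule: finite_induct)
  case empty
  then show ?case by simp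
next
  case (insert a J)
  define c where "c = 1 - sum w J"
  have wa: "0 \<le> w a" "w a \<le> c" and va: "v a \<in> prob_simplex"
    using insert by (auto simp: c_def)
  have rest: "1 - sum w (insert a J) = c - w a"
    using insert.hyps by (simp add: c_def)
  show ?case
  proof (cases "c = 0")
    case True
    then have "w a = 0" using wa by simp
    then show ?thesis
      using insert.IH[of t] insert.prems insert.hyps True by (simp add: c_def)
  next
    case False
    define s where "s = w a / c"
    define t' where "t' = (\<lambda>k. s * v a k + (1 - s) * t k)"
    have s: "0 \<le> s" "s \<le> 1"
      using wa False by (auto simp: s_def)
    have "t' \<in> prob_simplex"
      unfolding t'_def using convex_comb_in_prob_simplex va insert.prems(4) s by blast
    moreover have "sum w J \<le> 1"
      using wa by (simp add: c_def)
    ultimately have IH: "(\<Sum>i\<in>J. w i * f (v i)) + c * f t' \<le> f (\<lambda>k. (\<Sum>i\<in>J. w i * v i k) + c * t' k)"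
      using insert.IH[of t'] insert.prems by (simp add: c_def)
    have "c * (s * f (v a) + (1 - s) * f t) \<le> c * f t'"
      using conc va insert.prems(4) s wa unfolding concave_on_prob_simplex_def t'_def
      by (intro mult_left_mono) auto
    moreover have "c * (s * f (v a) + (1 - s) * f t) = w a * f (v a) + (c - w a) * f t"
      using False by (simp add: s_def field_simps)
    moreover have "(\<lambda>k. (\<Sum>i\<in>J. w i * v i k) + c * t' k)
        = (\<lambda>k. (\<Sum>i\<in>insert a J. w i * v i k) + (c - w a) * t k)"
      using False insert.hyps by (intro ext) (simp add: t'_def s_def field_simps)
    ultimately have "(\<Sum>i\<in>insert a J. w i * f (v i)) + (c - w a) * f t
        \<le> f (\<lambda>k. (\<Sum>i\<in>insert a J. w i * v i k) + (c - w a) * t k)"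
      using IH insert.hyps by simp
    then show ?thesis
      unfolding rest .
  qed
qed

lemma has_sum_sum:
  fixes g :: "'k \<Rightarrow> 'i \<Rightarrow> real"
  assumes "finite K" "\<And>k. k \<in> K \<Longrightarrow> (g k has_sum s k) I"
  shows "((\<lambda>i. \<Sum>k\<in>K. g k i) has_sum (\<Sum>k\<in>K. s k)) I"
  using assms by (induction K rule: finite_induct) (auto intro: has_sum_add)

lemma jensen_prob_simplex_partial:
  assumes conc: "concave_on_prob_simplex f" and bound: "\<And>a. a \<in> prob_simplex \<Longrightarrow> \<bar>f a\<bar> \<le> B"
    and w: "\<And>i. i \<in> I \<Longrightarrow> 0 \<le> w i" and v: "\<And>i. i \<in> I \<Longrightarrow> v i \<in> prob_simplex"
    and m: "\<And>k. ((\<lambda>i. w i * v i k) has_sum m k) I" "m \<in> prob_simplex"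
    and J: "finite J" "J \<subseteq> I"
  shows "(\<Sum>i\<in>J. w i * f (v i)) \<le> f m + B * (1 - sum w J)"
proof -
  define W where "W = sum w J"
  define r where "r = (\<lambda>k. m k - (\<Sum>i\<in>J. w i * v i k))"
  have "((\<lambda>i. w i * v i k) has_sum r k) (I - J)" for k
    unfolding r_def using J by (intro has_sum_Diff m) auto
  then have r_nonneg: "0 \<le> r k" for k
    by (rule has_sum_nonneg) (use w v in \<open>auto simp: prob_simplex_def\<close>)
  have "sum r UNIV = sum m UNIV - (\<Sum>i\<in>J. w i * sum (v i) UNIV)"
    by (simp add: r_def sum_subtractf sum_distrib_left sum.swap[of _ J])
  also have "\<dots> = 1 - W"
    using m(2) v J unfolding W_def by (simp add: prob_simplex_def subset_iff cong: sum.cong)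
  finally have r_sum: "sum r UNIV = 1 - W" .
  then have W_le: "W \<le> 1"
    using sum_nonneg[of UNIV r] r_nonneg by simp
  \<comment> \<open>If \<open>W = 1\<close> the tail carries no mass and any point of the simplex will do.\<close>
  define t where "t = (if W < 1 then (\<lambda>k. r k / (1 - W)) else m)"
  have t: "t \<in> prob_simplex"
    using r_nonneg r_sum m(2) by (simp add: t_def prob_simplex_def sum_divide_distrib[symmetric])
  have m_eq: "m = (\<lambda>k. (\<Sum>i\<in>J. w i * v i k) + (1 - W) * t k)"
  proof (cases "W < 1")
    case True
    then show ?thesis by (auto simp: t_def r_def)
  next
    case False
    then have "r k = 0" for k
      using r_sum W_le r_nonneg sum_nonneg_eq_0_iff[of UNIV r] by simp
    then show ?thesis
      using False W_le by (auto simp: r_def)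
  qed
  have "(\<Sum>i\<in>J. w i * f (v i)) + (1 - W) * f t \<le> f m"
    unfolding m_eq W_def using J W_le w v t
    by (intro jensen_prob_simplex_finite[OF conc]) (auto simp: W_def)
  moreover have "(1 - W) * - B \<le> (1 - W) * f t"
    using bound[OF t] W_le by (intro mult_left_mono) auto
  ultimately show ?thesis
    by (simp add: W_def algebra_simps)
qed

lemma jensen_prob_simplex_has_sum:
  assumes conc: "concave_on_prob_simplex f" and bound: "\<And>a. a \<in> prob_simplex \<Longrightarrow> \<bar>f a\<bar> \<le> B"
    and w: "\<And>i. i \<in> I \<Longrightarrow> 0 \<le> w i" and v: "\<And>i. i \<in> I \<Longrightarrow> v i \<in> prob_simplex"
    and m: "\<And>k. ((\<lambda>i. w i * v i k) has_sum m k) I" "m \<in> prob_simplex"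
  shows "(\<Sum>\<^sub>\<infinity>i\<in>I. w i * f (v i)) \<le> f m"
proof -
  have "((\<lambda>i. \<Sum>k\<in>UNIV. w i * v i k) has_sum (\<Sum>k\<in>UNIV. m k)) I"
    by (rule has_sum_sum) (use m(1) in auto)
  moreover have "(\<Sum>k\<in>UNIV. w i * v i k) = w i" if "i \<in> I" for i
    using v[OF that] by (simp add: prob_simplex_def sum_distrib_left[symmetric])
  ultimately have "(w has_sum sum m UNIV) I"
    by (simp cong: has_sum_cong)
  then have w_sum: "(w has_sum 1) I"
    using m(2) by (simp add: prob_simplex_def)
  have "(\<lambda>i. B * w i) summable_on I"
    using w_sum by (intro summable_on_cmult_right has_sum_imp_summable)
  moreover have "norm (w i * f (v i)) \<le> B * w i" if "i \<in> I" for i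
    using mult_left_mono[OF bound[OF v[OF that]] w[OF that]] w[OF that]
    by (simp add: abs_mult mult.commute)
  ultimately have "(\<lambda>i. norm (w i * f (v i))) summable_on I"
    by (rule summable_on_comparison_test) (simp_all only: norm_ge_zero)
  then have "(\<lambda>i. w i * f (v i)) summable_on I"
    by (subst summable_on_iff_abs_summable_on_real)
  then have partial_sums: "((\<lambda>J. \<Sum>i\<in>J. w i * f (v i)) \<longlongrightarrow> (\<Sum>\<^sub>\<infinity>i\<in>I. w i * f (v i)))
      (finite_subsets_at_top I)"
    by (simp add: summable_iff_has_sum_infsum has_sum_def)
  have bounds: "((\<lambda>J. f m + B * (1 - sum w J)) \<longlongrightarrow> f m + B * (1 - 1)) (finite_subsets_at_top I)"
    using w_sum unfolding has_sum_def by (intro tendsto_intros)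
  have "(\<Sum>\<^sub>\<infinity>i\<in>I. w i * f (v i)) \<le> f m + B * (1 - 1)"
    by (rule tendsto_le[OF _ bounds partial_sums eventually_finite_subsets_at_top_weakI])
      (use jensen_prob_simplex_partial[OF conc bound w v m] in auto)
  then show ?thesis
    by simp
qed

lemma to_list_conv_map:
  obtains ws :: "'k::finite list"
  where "distinct ws" "set ws = UNIV" "\<And>a. to_list a = map a ws"
proof -
  define ws where "ws = (SOME ws. distinct ws \<and> set ws = (UNIV :: 'k set))"
  have "distinct ws \<and> set ws = UNIV"
    unfolding ws_def
    by (rule someI_ex) (use finite_distinct_list[of "UNIV :: 'k set"] in auto)
  then show thesis
    using that[of ws] by (simp add: to_list_def ws_def)
qed

lemma prob_vec_to_list:
  fixes a :: "'k::finite \<Rightarrow> real"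
  assumes "a \<in> prob_simplex"
  shows "prob_vec (to_list a)"
proof -
  obtain ws :: "'k list" where "distinct ws" "set ws = UNIV" "\<And>a. to_list a = map a ws"
    by (meson to_list_conv_map)
  then show ?thesis
    using assms by (simp add: prob_vec_def prob_simplex_def sum_list_distinct_conv_sum_set)
qed

lemma concave_on_prob_simplex_to_list:
  assumes "concave_F F"
  shows "concave_on_prob_simplex (\<lambda>a :: 'k::finite \<Rightarrow> real. F (to_list a))"
proof -
  obtain ws :: "'k list" where ws: "\<And>a. to_list a = map a ws"
    by (meson to_list_conv_map)
  then have "to_list (\<lambda>k. t * a k + (1 - t) * b k)
      = map2 (\<lambda>x y. t * x + (1 - t) * y) (to_list a) (to_list b)" for t and a b :: "'k \<Rightarrow> real"
    by (simp add: zip_map_map zip_same_conv_map)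
  moreover have "length (to_list a) = length (to_list b)" for a b :: "'k \<Rightarrow> real"
    using ws by simp
  ultimately show ?thesis
    using assms prob_vec_to_list by (fastforce simp: concave_on_prob_simplex_def concave_F_def)
qed

lemma concave_F_uminus_iff: "concave_F (\<lambda>xs. - F xs) \<longleftrightarrow> convex_F F"
proof -
  have "- a - b \<le> - c \<longleftrightarrow> c \<le> a + b" for a b c :: real
    by linarith
  then show ?thesis
    by (simp add: concave_F_def convex_F_def)
qed

lemma pmf_in_prob_simplex: "pmf p \<in> prob_simplex"
  by (simp add: prob_simplex_def sum_pmf_eq_1)

lemma pmf_snd_eq_sum:
  fixes P :: "('x::finite \<times> 'y) pmf"
  shows "pmf (map_pmf snd P) y = (\<Sum>x\<in>UNIV. pmf P (x, y))"
proof -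
  have fibre: "snd -` {y} = (\<lambda>x. (x, y)) ` UNIV"
    by auto
  have "pmf (map_pmf snd P) y = measure P ((\<lambda>x. (x, y)) ` UNIV)"
    by (simp add: pmf_map fibre)
  also have "\<dots> = (\<Sum>x\<in>UNIV. pmf P (x, y))"
    by (simp add: measure_measure_pmf_finite sum.reindex inj_on_def)
  finally show ?thesis .
qed

lemma cond_pmf_in_prob_simplex:
  fixes P :: "('x::finite \<times> 'y) pmf"
  assumes "0 < pmf (map_pmf snd P) y"
  shows "(\<lambda>x. pmf P (x, y) / pmf (map_pmf snd P) y) \<in> prob_simplex"
  using assms by (simp add: prob_simplex_def pmf_snd_eq_sum sum_divide_distrib[symmetric])

lemma has_sum_pmf: "(pmf p has_sum measure p A) A"
proof -
  have "pmf p summable_on A"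
    using abs_summable_equivalent pmf_abs_summable summable_on_iff_abs_summable_on_real by blast
  moreover have "measure p A = infsum (pmf p) A"
    using measure_pmf_conv_infsetsum infsetsum_infsum pmf_abs_summable by metis
  ultimately show ?thesis
    by (simp add: summable_iff_has_sum_infsum)
qed

lemma has_sum_pmf_fst:
  fixes P :: "('x::finite \<times> 'y) pmf"
  shows "((\<lambda>y. pmf P (x, y)) has_sum pmf (map_pmf fst P) x) {y. 0 < pmf (map_pmf snd P) y}"
proof -
  have fibre: "fst -` {x} = Pair x ` UNIV"
    by auto
  have "(pmf P has_sum pmf (map_pmf fst P) x) (Pair x ` UNIV)"
    using has_sum_pmf[of P "fst -` {x}"] by (simp add: pmf_map fibre)
  then have "((\<lambda>y. pmf P (x, y)) has_sum pmf (map_pmf fst P) x) UNIV"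
    by (subst (asm) has_sum_reindex) (auto simp: inj_on_def o_def)
  moreover have "pmf P (x, y) = 0" if "y \<notin> {y. 0 < pmf (map_pmf snd P) y}" for y
    using that pmf_nonneg[of "map_pmf snd P" y]
    by (simp add: pmf_snd_eq_sum sum_nonneg_eq_0_iff)
  ultimately show ?thesis
    by (subst has_sum_cong_neutral[where T = UNIV]) auto
qed

lemma has_sum_matvec:
  assumes "\<And>x. ((\<lambda>i. c i * q i x) has_sum p x) I"
  shows "((\<lambda>i. c i * matvec G (q i) k) has_sum matvec G p k) I"
proof -
  have "((\<lambda>i. \<Sum>x\<in>UNIV. G k x * (c i * q i x)) has_sum (\<Sum>x\<in>UNIV. G k x * p x)) I"
    by (rule has_sum_sum) (use assms in \<open>auto intro: has_sum_cmult_right\<close>)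
  then show ?thesis
    by (simp add: matvec_def sum_distrib_left mult.left_commute)
qed

lemma infsum_persp_le_persp:
  fixes u :: "'i \<Rightarrow> 'k::finite \<Rightarrow> real"
  assumes conc: "concave_F F" and bnd: "\<And>xs. prob_vec xs \<Longrightarrow> \<bar>F xs\<bar> \<le> B"
    and c: "\<And>i. i \<in> I \<Longrightarrow> 0 \<le> c i"
    and u_nonneg: "\<And>i k. i \<in> I \<Longrightarrow> 0 \<le> u i k" and u_pos: "\<And>i. i \<in> I \<Longrightarrow> 0 < norm1 (u i)"
    and u0: "\<And>k. ((\<lambda>i. c i * u i k) has_sum u0 k) I" and u0_pos: "0 < norm1 u0"
  shows "(\<Sum>\<^sub>\<infinity>i\<in>I. c i * persp F (u i)) \<le> persp F u0"
proof -
  define s where "s = norm1 u0"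
  define w where "w i = c i * norm1 (u i) / s" for i
  define v where "v i = (\<lambda>k. u i k / norm1 (u i))" for i
  have s_pos: "0 < s"
    using u0_pos by (simp add: s_def)
  have "0 \<le> u0 k" for k
    using u0 by (rule has_sum_nonneg) (simp add: c u_nonneg)
  then have u0_simplex: "(\<lambda>k. u0 k / s) \<in> prob_simplex"
    unfolding s_def using u0_pos by (rule normalized_in_prob_simplex)
  have "(\<Sum>\<^sub>\<infinity>i\<in>I. w i * F (to_list (v i))) \<le> F (to_list (\<lambda>k. u0 k / s))"
  proof (rule jensen_prob_simplex_has_sum[OF concave_on_prob_simplex_to_list[OF conc] _ _ _ _ u0_simplex])
    show "\<bar>F (to_list a)\<bar> \<le> B" if "a \<in> prob_simplex" for a
      using bnd prob_vec_to_list that by blast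
    show "0 \<le> w i" if "i \<in> I" for i
      using c[OF that] u_pos[OF that] s_pos by (simp add: w_def)
    show "v i \<in> prob_simplex" if "i \<in> I" for i
      unfolding v_def using u_nonneg[OF that] u_pos[OF that] by (rule normalized_in_prob_simplex)
    show "((\<lambda>i. w i * v i k) has_sum u0 k / s) I" for k
    proof -
      have "((\<lambda>i. c i * u i k / s) has_sum u0 k / s) I"
        using has_sum_cmult_right[OF u0, of "1 / s"] by simp
      moreover have "c i * u i k / s = w i * v i k" if "i \<in> I" for i
        using u_pos[OF that] by (simp add: w_def v_def)
      ultimately show ?thesis
        by (simp cong: has_sum_cong)
    qed
  qed
  then have "s * (\<Sum>\<^sub>\<infinity>i\<in>I. w i * F (to_list (v i))) \<le> persp F u0"
    using s_pos by (simp add: persp_def s_def)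
  moreover have "c i * persp F (u i) = s * (w i * F (to_list (v i)))" if "i \<in> I" for i
    using s_pos by (simp add: persp_def w_def v_def)
  ultimately show ?thesis
    by (simp add: infsum_cmult_right' cong: infsum_cong)
qed

lemma infsum_cond_persp_le_persp:
  fixes G :: "'w::finite \<Rightarrow> 'x::finite \<Rightarrow> real" and P :: "('x \<times> 'y) pmf"
  assumes G_nonneg: "\<And>q k. q \<in> prob_simplex \<Longrightarrow> 0 \<le> matvec G q k"
    and G_pos: "\<And>q. q \<in> prob_simplex \<Longrightarrow> 0 < norm1 (matvec G q)"
    and conc: "concave_F F" and bnd: "\<And>xs. prob_vec xs \<Longrightarrow> \<bar>F xs\<bar> \<le> B"
  shows "(\<Sum>\<^sub>\<infinity>y\<in>{y. 0 < pmf (map_pmf snd P) y}. pmf (map_pmf snd P) y *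
           persp F (matvec G (\<lambda>x. pmf P (x, y) / pmf (map_pmf snd P) y)))
         \<le> persp F (matvec G (pmf (map_pmf fst P)))"
proof (rule infsum_persp_le_persp[OF conc bnd])
  fix y assume "y \<in> {y. 0 < pmf (map_pmf snd P) y}"
  then have cond: "(\<lambda>x. pmf P (x, y) / pmf (map_pmf snd P) y) \<in> prob_simplex"
    by (simp add: cond_pmf_in_prob_simplex)
  show "0 \<le> pmf (map_pmf snd P) y"
    by simp
  show "0 \<le> matvec G (\<lambda>x. pmf P (x, y) / pmf (map_pmf snd P) y) k" for k
    using cond by (rule G_nonneg)
  show "0 < norm1 (matvec G (\<lambda>x. pmf P (x, y) / pmf (map_pmf snd P) y))"
    using cond by (rule G_pos)
next
  fix k
  show "((\<lambda>y. pmf (map_pmf snd P) y * matvec G (\<lambda>x. pmf P (x, y) / pmf (map_pmf snd P) y) k)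
      has_sum matvec G (pmf (map_pmf fst P)) k) {y. 0 < pmf (map_pmf snd P) y}"
  proof (rule has_sum_matvec)
    fix x
    show "((\<lambda>y. pmf (map_pmf snd P) y * (pmf P (x, y) / pmf (map_pmf snd P) y))
        has_sum pmf (map_pmf fst P) x) {y. 0 < pmf (map_pmf snd P) y}"
      by (rule has_sum_cong[THEN iffD2, OF _ has_sum_pmf_fst]) simp
  qed
next
  show "0 < norm1 (matvec G (pmf (map_pmf fst P)))"
    using pmf_in_prob_simplex by (rule G_pos)
qed

theorem proposition3:
  fixes G :: "'w::finite \<Rightarrow> 'x::finite \<Rightarrow> real"
    and \<eta> :: "real \<Rightarrow> real" and F :: "real list \<Rightarrow> real"
    and P :: "('x \<times> 'y) pmf"
  assumes G_pos: "\<And>q. (\<forall>x. 0 \<le> q x) \<Longrightarrow> (\<Sum>x\<in>UNIV. q x) = 1 \<Longrightarrow> norm1 (matvec G q) > 0"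
    and G_nonneg: "\<And>q w. (\<forall>x. 0 \<le> q x) \<Longrightarrow> (\<Sum>x\<in>UNIV. q x) = 1 \<Longrightarrow>
                     matvec G q w / norm1 (matvec G q) \<ge> 0"
    and ent: "generalised_entropy \<eta> F"
  shows "Hg \<eta> F G P - Hg_cond \<eta> F G P \<ge> 0"
proof -
  have G_pos': "\<And>q. q \<in> prob_simplex \<Longrightarrow> 0 < norm1 (matvec G q)"
    using G_pos by (simp add: prob_simplex_def)
  have G_nonneg': "0 \<le> matvec G q k" if "q \<in> prob_simplex" for q k
  proof -
    have "0 \<le> matvec G q k / norm1 (matvec G q)"
      using G_nonneg that by (simp add: prob_simplex_def)
    then show ?thesis
      using G_pos'[OF that] by (simp add: zero_le_divide_iff)
  qed
  obtain B where bnd: "\<And>xs. prob_vec xs \<Longrightarrow> \<bar>F xs\<bar> \<le> B"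
    using ent unfolding generalised_entropy_def by blast
  consider (concave) "mono \<eta>" "concave_F F" | (convex) "antimono \<eta>" "convex_F F"
    using ent unfolding generalised_entropy_def by blast
  then show ?thesis
  proof cases
    case concave
    then show ?thesis
      using infsum_cond_persp_le_persp[OF G_nonneg' G_pos' concave(2) bnd, of P]
      by (simp add: Hg_def Hg_cond_def monoD)
  next
    case convex
    then have "concave_F (\<lambda>xs. - F xs)"
      by (simp add: concave_F_uminus_iff)
    from infsum_cond_persp_le_persp[OF G_nonneg' G_pos' this, of B P] bnd
    have "persp F (matvec G (pmf (map_pmf fst P)))
        \<le> (\<Sum>\<^sub>\<infinity>y\<in>{y. 0 < pmf (map_pmf snd P) y}. pmf (map_pmf snd P) y *
             persp F (matvec G (\<lambda>x. pmf P (x, y) / pmf (map_pmf snd P) y)))"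
      by (simp add: persp_def infsum_uminus)
    then show ?thesis
      using convex by (simp add: Hg_def Hg_cond_def antimonoD)
  qed
qed

end
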